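(* Let $a_2,a_3,b_2,b_3$ be nonzero real numbers satisfying one of the following conditions: (I) $a_2b_3\neq a_3b_2$ and $a_2b_2\neq -a_3b_3$; (II) $a_2b_3=a_3b_2$ and $|a_2|\neq|a_3|$; (III) $a_2b_3=a_3b_2$ and $a_2=a_3$. Let $\xi_1,\xi_2,\xi_3,\xi_4$ be independent real-valued random variables whose characteristic functions vanish nowhere on $\mathbb{R}$, with $\xi_2$ and $\xi_3$ identically distributed, and put $L_1=\xi_1+a_2\xi_2+a_3\xi_3$, $L_2=b_2\xi_2+b_3\xi_3+\xi_4$. Let $\eta_1,\eta_2,\eta_3,\eta_4$ be any independent real-valued random variables whose characteristic functions vanish nowhere, with $\eta_2$ and $\eta_3$ identically distributed, and put $M_1=\eta_1+a_2\eta_2+a_3\eta_3$, $M_2=b_2\eta_2+b_3\eta_3+\eta_4$. If $(L_1,L_2)$ and $(M_1,M_2)$ have the same distribution, then there exist real numbers $\alpha_1,\dots,\alpha_4$ such that for each $j=1,2,3,4$ the distribution of $\eta_j$ equals that of $\xi_j+\alpha_j$. *)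

theory Defs
  imports "HOL-Probability.Probability"
begin

end

theory Submission
  imports Defs
begin

text \<open>
  Write \<open>f\<^sub>j\<close>, \<open>g\<^sub>j\<close> for the characteristic functions of \<open>\<xi>\<^sub>j\<close>, \<open>\<eta>\<^sub>j\<close>. Evaluating the
  characteristic function of the common joint law at \<open>(s, t)\<close> and using independence gives
  \<open>f\<^sub>1(s) f\<^sub>2(a\<^sub>2 s + b\<^sub>2 t) f\<^sub>2(a\<^sub>3 s + b\<^sub>3 t) f\<^sub>4(t) = g\<^sub>1(s) g\<^sub>2(a\<^sub>2 s + b\<^sub>2 t) g\<^sub>2(a\<^sub>3 s + b\<^sub>3 t) g\<^sub>4(t)\<close>,
  so the continuous ratios \<open>h\<^sub>j = g\<^sub>j / f\<^sub>j\<close> satisfy a multiplicative equation, and their continuous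
  logarithms the additive equation \<open>\<psi>\<^sub>1(s) + \<psi>(a\<^sub>2 s + b\<^sub>2 t) + \<psi>(a\<^sub>3 s + b\<^sub>3 t) + \<psi>\<^sub>4(t) = 0\<close>.
  In case (I) mixed second differences show that \<open>\<psi>(h + k) - \<psi>(h) - \<psi>(k)\<close> is a bilinear form
  \<open>c h k\<close> with \<open>c (a\<^sub>2 b\<^sub>2 + a\<^sub>3 b\<^sub>3) = 0\<close>, so \<open>\<psi>\<close> is additive. In cases (II) and (III) the
  equation only involves \<open>\<psi>(x) + \<psi>(c x)\<close> with \<open>c = a\<^sub>3 / a\<^sub>2\<close>, which is therefore additive, and
  \<open>\<psi>\<close> minus a linear function changes sign under \<open>x \<mapsto> c x\<close>, hence vanishes because
  \<open>|c| \<noteq> 1\<close>. Either way \<open>\<psi>\<close>, and with it \<open>\<psi>\<^sub>1\<close> and \<open>\<psi>\<^sub>4\<close>, is linear; so \<open>h\<^sub>j(t) = exp(t z\<^sub>j)\<close>,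
  conjugate symmetry of characteristic functions forces \<open>Re z\<^sub>j = 0\<close>, and \<open>\<eta>\<^sub>j\<close> is distributed
  as \<open>\<xi>\<^sub>j + Im z\<^sub>j\<close>.
\<close>

lemma continuous_additive_imp_scaleR:
  fixes f :: "real \<Rightarrow> 'a::real_normed_vector"
  assumes cont: "continuous_on UNIV f" and add: "\<And>x y. f (x + y) = f x + f y"
  shows "f x = x *\<^sub>R f 1"
proof -
  interpret additive f by unfold_locales (rule add)
  have nat: "f (of_nat n * y) = of_nat n *\<^sub>R f y" for n y
    by (induction n) (simp_all add: zero add distrib_right scaleR_add_left)
  have int: "f (of_int m * y) = of_int m *\<^sub>R f y" for m y
    by (cases m rule: int_cases2) (simp_all add: nat minus)
  have rat: "f q = q *\<^sub>R f 1" if q: "q \<in> \<rat>" for q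
  proof -
    obtain a b where ab: "b > 0" "q = of_int a / of_int b"
      using q by (elim Rats_cases') blast
    have "of_int b *\<^sub>R f q = f (of_int a * 1)"
      using ab int[of b q] by simp
    also have "\<dots> = of_int a *\<^sub>R f 1"
      by (rule int)
    finally have scaled: "of_int b *\<^sub>R f q = of_int a *\<^sub>R f 1" .
    have "f q = (1 / of_int b) *\<^sub>R (of_int b *\<^sub>R f q)"
      using ab(1) by simp
    also have "\<dots> = q *\<^sub>R f 1"
      unfolding scaled using ab by simp
    finally show ?thesis .
  qed
  have "closed {x. f x = x *\<^sub>R f 1}"
    by (intro closed_Collect_eq continuous_intros cont)
  moreover have "\<rat> \<subseteq> {x. f x = x *\<^sub>R f 1}"
    using rat by blast
  ultimately have "closure \<rat> \<subseteq> {x. f x = x *\<^sub>R f 1}"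
    by (rule closure_minimal[rotated])
  then show ?thesis
    unfolding Rats_closure_real by blast
qed

lemma second_difference_invariant_imp_bilinear_defect:
  fixes p :: "real \<Rightarrow> 'a::real_normed_vector"
  assumes cont: "continuous_on UNIV p"
    and inv: "\<And>u h k. p (u + h + k) - p (u + h) - p (u + k) + p u = p (h + k) - p h - p k"
  obtains c where "\<And>h k. p (h + k) - p h - p k = (h * k) *\<^sub>R c"
proof -
  define B where "B h k = p (h + k) - p h - p k" for h k
  have B_add: "B (h1 + h2) k = B h1 k + B h2 k" for h1 h2 k
    using inv[of h2 h1 k] by (simp add: B_def algebra_simps)
  have B_sym: "B h k = B k h" for h k
    by (simp add: B_def add.commute)
  have B_cont: "continuous_on UNIV (\<lambda>h. B h k)" for k
    unfolding B_def by (intro continuous_intros continuous_on_compose2[OF cont]) auto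
  have B_linear: "B h k = h *\<^sub>R B 1 k" for h k
    by (rule continuous_additive_imp_scaleR[where f = "\<lambda>h. B h k", OF B_cont B_add])
  have "B h k = (h * k) *\<^sub>R B 1 1" for h k
    unfolding B_linear[of h k] B_sym[of 1 k] B_linear[of k 1] by (simp add: mult.commute)
  then show ?thesis
    using that unfolding B_def by blast
qed

lemma functional_equation_nondegenerate_linear:
  fixes p1 p p4 :: "real \<Rightarrow> 'a::real_normed_vector"
  assumes cont: "continuous_on UNIV p" and p0: "p 0 = 0"
    and eq: "\<And>s t. p1 s + p (a2 * s + b2 * t) + p (a3 * s + b3 * t) + p4 t = 0"
    and nz: "a2 \<noteq> 0" "b2 \<noteq> 0"
    and det: "a2 * b3 \<noteq> a3 * b2" and sum: "a2 * b2 \<noteq> - (a3 * b3)"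
  shows "p x = x *\<^sub>R p 1"
proof -
  define \<Delta> where "\<Delta> u h k = p (u + h + k) - p (u + h) - p (u + k) + p u" for u h k
  have mixed: "\<Delta> (a2 * s + b2 * t) (a2 * \<sigma>) (b2 * \<tau>) + \<Delta> (a3 * s + b3 * t) (a3 * \<sigma>) (b3 * \<tau>) = 0"
    for s t \<sigma> \<tau>
  proof -
    have "\<Delta> (a2 * s + b2 * t) (a2 * \<sigma>) (b2 * \<tau>) + \<Delta> (a3 * s + b3 * t) (a3 * \<sigma>) (b3 * \<tau>)
      = (p1 (s + \<sigma>) + p (a2 * (s + \<sigma>) + b2 * (t + \<tau>)) + p (a3 * (s + \<sigma>) + b3 * (t + \<tau>)) + p4 (t + \<tau>))
      - (p1 (s + \<sigma>) + p (a2 * (s + \<sigma>) + b2 * t) + p (a3 * (s + \<sigma>) + b3 * t) + p4 t)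
      - (p1 s + p (a2 * s + b2 * (t + \<tau>)) + p (a3 * s + b3 * (t + \<tau>)) + p4 (t + \<tau>))
      + (p1 s + p (a2 * s + b2 * t) + p (a3 * s + b3 * t) + p4 t)"
      by (simp add: \<Delta>_def algebra_simps)
    also have "\<dots> = 0"
      by (simp only: eq) simp
    finally show ?thesis .
  qed
  \<comment> \<open>the determinant is nonzero, so \<open>a2 * s + b2 * t\<close> and \<open>a3 * s + b3 * t\<close> vary independently\<close>
  have decoupled: "\<Delta> u (a2 * \<sigma>) (b2 * \<tau>) + \<Delta> v (a3 * \<sigma>) (b3 * \<tau>) = 0" for u v \<sigma> \<tau>
  proof -
    define D where "D = a2 * b3 - a3 * b2"
    define s where "s = (b3 * u - b2 * v) / D"
    define t where "t = (a2 * v - a3 * u) / D"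
    have "D \<noteq> 0"
      using det by (simp add: D_def)
    then have "a2 * s + b2 * t = u" "a3 * s + b3 * t = v"
      by (simp_all add: s_def t_def field_simps) (simp_all add: D_def algebra_simps)
    then show ?thesis
      using mixed[of s t \<sigma> \<tau>] by simp
  qed
  have "\<Delta> u h k = \<Delta> 0 h k" for u h k
    using decoupled[where u = u and v = 0 and \<sigma> = "h / a2" and \<tau> = "k / b2"]
      decoupled[where u = 0 and v = 0 and \<sigma> = "h / a2" and \<tau> = "k / b2"] nz
    by simp (metis add_right_cancel)
  then have "p (u + h + k) - p (u + h) - p (u + k) + p u = p (h + k) - p h - p k" for u h k
    using p0 by (simp add: \<Delta>_def)
  then obtain c where c: "\<And>h k. p (h + k) - p h - p k = (h * k) *\<^sub>R c"
    using second_difference_invariant_imp_bilinear_defect[OF cont] by blast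
  have "\<Delta> 0 h k = (h * k) *\<^sub>R c" for h k
    using c[of h k] p0 by (simp add: \<Delta>_def)
  then have "(a2 * b2 + a3 * b3) *\<^sub>R c = 0"
    using decoupled[where u = 0 and v = 0 and \<sigma> = 1 and \<tau> = 1] by (simp add: scaleR_add_left)
  moreover have "a2 * b2 + a3 * b3 \<noteq> 0"
    using sum by linarith
  ultimately have "c = 0"
    by simp
  then have "p (h + k) = p h + p k" for h k
    using c[of h k] by (simp add: algebra_simps)
  then show ?thesis
    by (rule continuous_additive_imp_scaleR[OF cont])
qed

lemma continuous_scaling_invariant_const:
  fixes \<rho> :: "real \<Rightarrow> 'a::real_normed_vector"
  assumes cont: "isCont \<rho> 0" and d: "\<bar>d\<bar> < 1" and inv: "\<And>x. \<rho> (d * x) = \<rho> x"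
  shows "\<rho> x = \<rho> 0"
proof -
  have "\<rho> (d ^ n * x) = \<rho> x" for n
    by (induction n) (simp_all add: mult.assoc inv)
  moreover have "(\<lambda>n. \<rho> (d ^ n * x)) \<longlonglongrightarrow> \<rho> 0"
  proof (rule isCont_tendsto_compose[OF cont])
    show "(\<lambda>n. d ^ n * x) \<longlonglongrightarrow> 0"
      using d by (intro tendsto_mult_left_zero LIMSEQ_power_zero) auto
  qed
  ultimately show ?thesis
    by (simp add: LIMSEQ_const_iff)
qed

lemma continuous_scaling_antiinvariant_eq_0:
  fixes \<rho> :: "real \<Rightarrow> 'a::real_normed_vector"
  assumes cont: "isCont \<rho> 0" and c: "\<bar>c\<bar> \<noteq> 1" and anti: "\<And>x. \<rho> (c * x) = - \<rho> x"
  shows "\<rho> x = 0"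
proof -
  have inv: "\<rho> (c\<^sup>2 * x) = \<rho> x" for x
    using anti[of x] anti[of "c * x"] by (simp add: power2_eq_square mult.assoc)
  have "\<rho> x = \<rho> 0"
  proof (cases "\<bar>c\<bar> < 1")
    case True
    then have "\<bar>c\<^sup>2\<bar> < 1"
      by (simp add: abs_square_less_1)
    then show ?thesis
      using inv by (rule continuous_scaling_invariant_const[OF cont])
  next
    case False
    then have "\<bar>c\<bar> > 1"
      using c by linarith
    then have "\<bar>1 / c\<^sup>2\<bar> < 1"
      by (simp add: abs_square_less_1 power_one_over[symmetric] power_abs[symmetric] divide_less_eq)
    moreover have "\<rho> (1 / c\<^sup>2 * y) = \<rho> y" for y
      using inv[of "1 / c\<^sup>2 * y"] \<open>\<bar>c\<bar> > 1\<close> by auto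
    ultimately show ?thesis
      using continuous_scaling_invariant_const[OF cont] by blast
  qed
  moreover have "\<rho> 0 = 0"
    using anti[of 0] by (simp add: eq_neg_iff_add_eq_0 scaleR_2[symmetric])
  ultimately show ?thesis
    by simp
qed

lemma dilation_sum_linear_imp_linear:
  fixes p :: "real \<Rightarrow> 'a::real_normed_vector"
  assumes cont: "continuous_on UNIV p" and sum: "\<And>x. p x + p (c * x) = x *\<^sub>R v"
    and c: "\<bar>c\<bar> \<noteq> 1 \<or> c = 1"
  shows "p x = x *\<^sub>R p 1"
proof (cases "c = 1")
  case True
  then have "p x = (1 / 2) *\<^sub>R (p x + p (c * x))" for x
    by (simp add: scaleR_2[symmetric])
  then have "p x = (x / 2) *\<^sub>R v" for x
    by (simp add: sum)
  from this[of x] this[of 1] show ?thesis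
    by simp
next
  case False
  then have "\<bar>c\<bar> \<noteq> 1" and c1: "1 + c \<noteq> 0"
    using c by auto
  define \<rho> where "\<rho> x = p x - (x / (1 + c)) *\<^sub>R v" for x
  have "\<rho> (c * x) = - \<rho> x" for x
  proof -
    have "(x + c * x) / (1 + c) = x"
      using c1 by (simp add: field_simps)
    moreover have "\<rho> x + \<rho> (c * x) = x *\<^sub>R v - ((x + c * x) / (1 + c)) *\<^sub>R v"
      using sum[of x] by (simp add: \<rho>_def add_divide_distrib algebra_simps)
    ultimately have "\<rho> x + \<rho> (c * x) = 0"
      by simp
    then show ?thesis
      by (simp add: eq_neg_iff_add_eq_0 add.commute)
  qed
  moreover have "isCont \<rho> 0"
    unfolding \<rho>_def using cont c1 by (intro continuous_intros) (auto simp: continuous_on_eq_continuous_at)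
  ultimately have "\<rho> y = 0" for y
    using continuous_scaling_antiinvariant_eq_0 \<open>\<bar>c\<bar> \<noteq> 1\<close> by blast
  from this[of x] this[of 1] show ?thesis
    by (simp add: \<rho>_def)
qed

lemma functional_equation_degenerate_linear:
  fixes p1 p p4 :: "real \<Rightarrow> 'a::real_normed_vector"
  assumes cont: "continuous_on UNIV p" and p1_0: "p1 0 = 0" and p4_0: "p4 0 = 0"
    and eq: "\<And>s t. p1 s + p (a2 * s + b2 * t) + p (a3 * s + b3 * t) + p4 t = 0"
    and nz: "a2 \<noteq> 0" "b2 \<noteq> 0"
    and det: "a2 * b3 = a3 * b2" and coef: "\<bar>a2\<bar> \<noteq> \<bar>a3\<bar> \<or> a2 = a3"
  shows "p x = x *\<^sub>R p 1"
proof -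
  define c where "c = a3 / a2"
  define \<phi> where "\<phi> x = p x + p (c * x)" for x
  have eq_\<phi>: "p1 s + \<phi> (a2 * s + b2 * t) + p4 t = 0" for s t
  proof -
    have "a3 = c * a2" "b3 = c * b2"
      using nz det by (simp_all add: c_def field_simps)
    then show ?thesis
      using eq[of s t] by (simp add: \<phi>_def algebra_simps)
  qed
  have "\<phi> (x + y) = \<phi> x + \<phi> y" for x y
  proof -
    have "\<phi> x = - p1 (x / a2)" "\<phi> y = - p4 (y / b2)"
      "\<phi> (x + y) = - (p1 (x / a2) + p4 (y / b2))"
      using eq_\<phi>[of "x / a2" 0] eq_\<phi>[of 0 "y / b2"] eq_\<phi>[of "x / a2" "y / b2"] nz p1_0 p4_0
      by (simp_all add: eq_neg_iff_add_eq_0 algebra_simps)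
    then show ?thesis
      by simp
  qed
  moreover have "continuous_on UNIV \<phi>"
    unfolding \<phi>_def by (intro continuous_intros continuous_on_compose2[OF cont]) auto
  ultimately have "p x + p (c * x) = x *\<^sub>R \<phi> 1" for x
    using continuous_additive_imp_scaleR unfolding \<phi>_def by blast
  moreover have "\<bar>c\<bar> \<noteq> 1 \<or> c = 1"
    using coef nz by (auto simp: c_def)
  ultimately show ?thesis
    using dilation_sum_linear_imp_linear[OF cont] by blast
qed

lemma functional_equation_linear:
  fixes p1 p p4 :: "real \<Rightarrow> 'a::real_normed_vector"
  assumes cont: "continuous_on UNIV p" and p0: "p 0 = 0" and p1_0: "p1 0 = 0" and p4_0: "p4 0 = 0"
    and eq: "\<And>s t. p1 s + p (a2 * s + b2 * t) + p (a3 * s + b3 * t) + p4 t = 0"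
    and nz: "a2 \<noteq> 0" "b2 \<noteq> 0"
    and cond: "(a2 * b3 \<noteq> a3 * b2 \<and> a2 * b2 \<noteq> - (a3 * b3))
             \<or> (a2 * b3 = a3 * b2 \<and> \<bar>a2\<bar> \<noteq> \<bar>a3\<bar>)
             \<or> (a2 * b3 = a3 * b2 \<and> a2 = a3)"
  shows "p x = x *\<^sub>R p 1"
    and "p1 x = - ((a2 + a3) * x) *\<^sub>R p 1"
    and "p4 x = - ((b2 + b3) * x) *\<^sub>R p 1"
proof -
  have p_linear: "p y = y *\<^sub>R p 1" for y
    using cond functional_equation_nondegenerate_linear[OF cont p0 eq nz]
      functional_equation_degenerate_linear[OF cont p1_0 p4_0 eq nz] by blast
  then show "p x = x *\<^sub>R p 1" .
  show "p1 x = - ((a2 + a3) * x) *\<^sub>R p 1"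
    using eq[of x 0] p_linear[of "a2 * x"] p_linear[of "a3 * x"] p4_0
    by (simp add: eq_neg_iff_add_eq_0 algebra_simps)
  show "p4 x = - ((b2 + b3) * x) *\<^sub>R p 1"
    using eq[of 0 x] p_linear[of "b2 * x"] p_linear[of "b3 * x"] p1_0
    by (simp add: eq_neg_iff_add_eq_0 algebra_simps)
qed

lemma continuous_exp_eq_1_imp_constant:
  fixes G :: "'a::topological_space \<Rightarrow> complex"
  assumes S: "connected S" and cont: "continuous_on S G" and exp_G: "\<And>x. x \<in> S \<Longrightarrow> exp (G x) = 1"
    and x: "x \<in> S" and y: "y \<in> S"
  shows "G x = G y"
proof -
  have "2 * pi \<le> norm (G z - G w)" if "z \<in> S" "w \<in> S" "G z \<noteq> G w" for z w
  proof -
    have "exp (G z - G w) = 1"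
      using exp_G that by (simp add: exp_diff)
    then obtain n :: int where re: "Re (G z - G w) = 0" and im: "Im (G z - G w) = of_int (2 * n) * pi"
      unfolding exp_eq_1 by blast
    have "n \<noteq> 0"
      using that(3) re im by (auto simp: complex_eq_iff)
    then have "2 * pi * 1 \<le> 2 * pi * \<bar>of_int n\<bar>"
      by (intro mult_left_mono) auto
    also have "\<dots> = \<bar>Im (G z - G w)\<bar>"
      using im by (simp add: abs_mult)
    also have "\<dots> \<le> norm (G z - G w)"
      by (rule abs_Im_le_cmod)
    finally show ?thesis
      by simp
  qed
  then have "G constant_on S"
    by (intro continuous_discrete_range_constant[OF S cont] exI[of _ "2 * pi"]) auto
  then show ?thesis
    using x y unfolding constant_on_def by force
qed

lemma continuous_logarithm_normalized:
  fixes h :: "'a::real_normed_vector \<Rightarrow> complex"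
  assumes "continuous_on UNIV h" "\<And>x. h x \<noteq> 0" "h 0 = 1"
  obtains \<psi> where "continuous_on UNIV \<psi>" "\<psi> 0 = 0" "\<And>x. h x = exp (\<psi> x)"
proof -
  obtain g where g: "continuous_on UNIV g" "\<And>x. x \<in> UNIV \<Longrightarrow> h x = exp (g x)"
    using continuous_logarithm_on_contractible[OF assms(1) contractible_UNIV] assms(2) by blast
  have "exp (g 0) = 1"
    using g(2) assms(3) by simp
  then show ?thesis
    using g by (intro that[of "\<lambda>x. g x - g 0"] continuous_intros) (auto simp: exp_diff)
qed

lemma multiplicative_functional_equation_exp:
  fixes h1 h2 h4 :: "real \<Rightarrow> complex"
  assumes cont: "continuous_on UNIV h1" "continuous_on UNIV h2" "continuous_on UNIV h4"
    and one: "h1 0 = 1" "h2 0 = 1" "h4 0 = 1"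
    and eq: "\<And>s t. h1 s * h2 (a2 * s + b2 * t) * h2 (a3 * s + b3 * t) * h4 t = 1"
    and nz: "a2 \<noteq> 0" "b2 \<noteq> 0"
    and cond: "(a2 * b3 \<noteq> a3 * b2 \<and> a2 * b2 \<noteq> - (a3 * b3))
             \<or> (a2 * b3 = a3 * b2 \<and> \<bar>a2\<bar> \<noteq> \<bar>a3\<bar>)
             \<or> (a2 * b3 = a3 * b2 \<and> a2 = a3)"
  obtains z where "\<And>t. h2 t = exp (of_real t * z)"
    and "\<And>t. h1 t = exp (of_real t * (- of_real (a2 + a3) * z))"
    and "\<And>t. h4 t = exp (of_real t * (- of_real (b2 + b3) * z))"
proof -
  have nz_h: "h1 s \<noteq> 0" "h2 s \<noteq> 0" "h4 s \<noteq> 0" for s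
  proof -
    have "h1 (s / a2) * h2 s * h2 (a3 * (s / a2)) * h4 0 = 1"
      using eq[of "s / a2" 0] nz by simp
    then show "h1 s \<noteq> 0" "h2 s \<noteq> 0" "h4 s \<noteq> 0"
      using eq[of s 0] eq[of 0 s] by auto
  qed
  obtain \<psi>1 where \<psi>1: "continuous_on UNIV \<psi>1" "\<psi>1 0 = 0" "\<And>x. h1 x = exp (\<psi>1 x)"
    using continuous_logarithm_normalized[OF cont(1) nz_h(1) one(1)] by blast
  obtain \<psi>2 where \<psi>2: "continuous_on UNIV \<psi>2" "\<psi>2 0 = 0" "\<And>x. h2 x = exp (\<psi>2 x)"
    using continuous_logarithm_normalized[OF cont(2) nz_h(2) one(2)] by blast
  obtain \<psi>4 where \<psi>4: "continuous_on UNIV \<psi>4" "\<psi>4 0 = 0" "\<And>x. h4 x = exp (\<psi>4 x)"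
    using continuous_logarithm_normalized[OF cont(3) nz_h(3) one(3)] by blast
  define F where "F s t = \<psi>1 s + \<psi>2 (a2 * s + b2 * t) + \<psi>2 (a3 * s + b3 * t) + \<psi>4 t" for s t
  have exp_F: "exp (F s t) = 1" for s t
    using eq[of s t] unfolding F_def \<psi>1(3) \<psi>2(3) \<psi>4(3) by (simp add: exp_add)
  have F_cont: "continuous_on UNIV (\<lambda>s. F s 0)" "continuous_on UNIV (F s)" for s
    unfolding F_def by (intro continuous_intros continuous_on_compose2[OF \<psi>1(1)]
        continuous_on_compose2[OF \<psi>2(1)] continuous_on_compose2[OF \<psi>4(1)]; simp)+
  have "F s 0 = F 0 0" for s
    by (rule continuous_exp_eq_1_imp_constant[OF connected_UNIV F_cont(1)]) (simp_all add: exp_F)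
  moreover have "F s t = F s 0" for s t
    by (rule continuous_exp_eq_1_imp_constant[OF connected_UNIV F_cont(2)]) (simp_all add: exp_F)
  ultimately have "\<psi>1 s + \<psi>2 (a2 * s + b2 * t) + \<psi>2 (a3 * s + b3 * t) + \<psi>4 t = 0" for s t
    by (simp add: F_def \<psi>1(2) \<psi>2(2) \<psi>4(2))
  note linear = functional_equation_linear[OF \<psi>2(1,2) \<psi>1(2) \<psi>4(2) this nz cond]
  show ?thesis
  proof (rule that[of "\<psi>2 1"])
    show "h2 t = exp (of_real t * \<psi>2 1)" for t
      using \<psi>2(3)[of t] linear(1)[of t] by (simp add: scaleR_conv_of_real)
    show "h1 t = exp (of_real t * (- of_real (a2 + a3) * \<psi>2 1))" for t
      using \<psi>1(3)[of t] linear(2)[of t] by (simp add: scaleR_conv_of_real algebra_simps)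
    show "h4 t = exp (of_real t * (- of_real (b2 + b3) * \<psi>2 1))" for t
      using \<psi>4(3)[of t] linear(3)[of t] by (simp add: scaleR_conv_of_real algebra_simps)
  qed
qed

lemma (in prob_space) indep_vars_measurable:
  "indep_vars M' X I \<Longrightarrow> i \<in> I \<Longrightarrow> X i \<in> measurable M (M' i)"
  by (simp add: indep_vars_def)

lemma char_uminus: "char M (- t) = cnj (char M t)"
  unfolding char_def Bochner_Integration.integral_cnj[symmetric]
  by (simp add: exp_cnj del: Bochner_Integration.integral_cnj)

lemma (in prob_space) char_distr_scale:
  assumes "X \<in> borel_measurable M"
  shows "char (distr M borel (\<lambda>x. c * X x)) t = char (distr M borel X) (c * t)"
  using assms by (simp add: char_def integral_distr mult.assoc mult.left_commute)

lemma (in prob_space) char_distr_shift: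
  assumes "X \<in> borel_measurable M"
  shows "char (distr M borel (\<lambda>x. X x + a)) t = char (distr M borel X) t * iexp (t * a)"
  using assms by (simp add: char_def integral_distr distrib_left exp_add)

lemma (in prob_space) char_distr_linear_combination:
  assumes indep: "indep_vars (\<lambda>_. borel) X A"
  shows "char (distr M borel (\<lambda>x. \<Sum>i\<in>A. c i * X i x)) t = (\<Prod>i\<in>A. char (distr M borel (X i)) (c i * t))"
proof -
  have "indep_vars (\<lambda>_. borel) (\<lambda>i x. c i * X i x) A"
    by (rule indep_vars_compose2[OF indep]) simp
  then have "char (distr M borel (\<lambda>x. \<Sum>i\<in>A. c i * X i x)) t
      = (\<Prod>i\<in>A. char (distr M borel (\<lambda>x. c i * X i x)) t)"
    by (rule char_distr_sum)
  also have "\<dots> = (\<Prod>i\<in>A. char (distr M borel (X i)) (c i * t))"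
    using indep_vars_measurable[OF indep] by (intro prod.cong refl char_distr_scale) simp
  finally show ?thesis .
qed

lemma distr_linear_combination_eq_if_distr_pair_eq:
  fixes U V :: "'a \<Rightarrow> real" and U' V' :: "'b \<Rightarrow> real"
  assumes eq: "distr M (borel \<Otimes>\<^sub>M borel) (\<lambda>x. (U x, V x)) = distr N (borel \<Otimes>\<^sub>M borel) (\<lambda>y. (U' y, V' y))"
    and [measurable]: "U \<in> borel_measurable M" "V \<in> borel_measurable M"
      "U' \<in> borel_measurable N" "V' \<in> borel_measurable N"
  shows "distr M borel (\<lambda>x. s * U x + t * V x) = distr N borel (\<lambda>y. s * U' y + t * V' y)"
proof -
  define g where "g z = s * fst z + t * snd z" for z :: "real \<times> real"
  have [measurable]: "g \<in> borel_measurable (borel \<Otimes>\<^sub>M borel)"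
    unfolding g_def by measurable
  have "distr M borel (\<lambda>x. s * U x + t * V x) = distr (distr M (borel \<Otimes>\<^sub>M borel) (\<lambda>x. (U x, V x))) borel g"
    by (subst distr_distr) (simp_all add: g_def comp_def)
  also have "\<dots> = distr (distr N (borel \<Otimes>\<^sub>M borel) (\<lambda>y. (U' y, V' y))) borel g"
    by (simp only: eq)
  also have "\<dots> = distr N borel (\<lambda>y. s * U' y + t * V' y)"
    by (subst distr_distr) (simp_all add: g_def comp_def)
  finally show ?thesis .
qed

lemma (in prob_space) char_two_linear_forms:
  fixes X :: "nat \<Rightarrow> 'a \<Rightarrow> real"
  assumes "indep_vars (\<lambda>_. borel) X {1, 2, 3, 4}"
  shows "char (distr M borel (\<lambda>x. s * (X 1 x + a2 * X 2 x + a3 * X 3 x) + t * (b2 * X 2 x + b3 * X 3 x + X 4 x))) 1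
    = char (distr M borel (X 1)) s * char (distr M borel (X 2)) (a2 * s + b2 * t)
      * char (distr M borel (X 3)) (a3 * s + b3 * t) * char (distr M borel (X 4)) t"
proof -
  define c where "c j = (if j = 1 then s else if j = 2 then a2 * s + b2 * t
    else if j = 3 then a3 * s + b3 * t else t)" for j :: nat
  have "(\<lambda>x. s * (X 1 x + a2 * X 2 x + a3 * X 3 x) + t * (b2 * X 2 x + b3 * X 3 x + X 4 x))
      = (\<lambda>x. \<Sum>j\<in>{1, 2, 3, 4}. c j * X j x)"
    by (simp add: c_def fun_eq_iff algebra_simps)
  then show ?thesis
    using char_distr_linear_combination[OF assms, of c 1] by (simp add: c_def mult.assoc)
qed

lemma distr_eq_shift_if_char_ratio_eq_exp:
  fixes X :: "'a \<Rightarrow> real" and Y :: "'b \<Rightarrow> real"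
  assumes M: "prob_space M" and N: "prob_space N"
    and X: "X \<in> borel_measurable M" and Y: "Y \<in> borel_measurable N"
    and nz: "\<And>t. char (distr M borel X) t \<noteq> 0"
    and ratio: "\<And>t. char (distr N borel Y) t / char (distr M borel X) t = exp (of_real t * z)"
  shows "distr N borel Y = distr M borel (\<lambda>x. X x + Im z)"
proof -
  have "exp (- z) = cnj (char (distr N borel Y) 1 / char (distr M borel X) 1)"
    using ratio[of "-1"] by (simp add: char_uminus)
  also have "\<dots> = cnj (exp z)"
    using ratio[of 1] by simp
  finally have "norm (exp (- z)) = norm (exp z)"
    by simp
  then have "exp (- Re z) = exp (Re z)"
    by simp
  then have "Re z = 0"
    by simp
  then have z: "of_real t * z = \<i> * of_real (t * Im z)" for t
    by (simp add: complex_eq_iff)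
  have exp_z: "exp (of_real t * z) = iexp (t * Im z)" for t
    by (simp only: z)
  have "char (distr N borel Y) t = char (distr M borel X) t * exp (of_real t * z)" for t
    using ratio[of t] nz[of t] by (simp add: divide_eq_eq)
  also have "char (distr M borel X) t * exp (of_real t * z) = char (distr M borel (\<lambda>x. X x + Im z)) t"
    for t unfolding exp_z by (rule prob_space.char_distr_shift[OF M X, symmetric])
  finally have "char (distr N borel Y) t = char (distr M borel (\<lambda>x. X x + Im z)) t" for t .
  then show ?thesis
    using M N X Y by (intro Levy_uniqueness prob_space.real_distribution_distr) auto
qed

lemma continuous_char_ratio:
  fixes X :: "'a \<Rightarrow> real" and Y :: "'b \<Rightarrow> real"
  assumes M: "prob_space M" and N: "prob_space N"
    and X: "X \<in> borel_measurable M" and Y: "Y \<in> borel_measurable N"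
    and nz: "\<And>t. char (distr M borel X) t \<noteq> 0"
  shows "continuous_on UNIV (\<lambda>t. char (distr N borel Y) t / char (distr M borel X) t)"
    and "char (distr N borel Y) 0 / char (distr M borel X) 0 = 1"
proof -
  have X': "real_distribution (distr M borel X)" and Y': "real_distribution (distr N borel Y)"
    using M N X Y by (simp_all add: prob_space.real_distribution_distr)
  show "continuous_on UNIV (\<lambda>t. char (distr N borel Y) t / char (distr M borel X) t)"
    using nz by (intro continuous_at_imp_continuous_on ballI isCont_divide
        real_distribution.isCont_char X' Y')
  show "char (distr N borel Y) 0 / char (distr M borel X) 0 = 1"
    by (simp add: real_distribution.char_zero X' Y')
qed

lemma char_products_eq_if_linear_forms_distr_eq:
  fixes \<xi> :: "nat \<Rightarrow> 'a \<Rightarrow> real" and \<eta> :: "nat \<Rightarrow> 'b \<Rightarrow> real"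
  assumes M: "prob_space M" and \<xi>_indep: "prob_space.indep_vars M (\<lambda>_. borel) \<xi> {1, 2, 3, 4}"
    and N: "prob_space N" and \<eta>_indep: "prob_space.indep_vars N (\<lambda>_. borel) \<eta> {1, 2, 3, 4}"
    and same: "distr M (borel \<Otimes>\<^sub>M borel)
                 (\<lambda>x. (\<xi> 1 x + a2 * \<xi> 2 x + a3 * \<xi> 3 x, b2 * \<xi> 2 x + b3 * \<xi> 3 x + \<xi> 4 x))
             = distr N (borel \<Otimes>\<^sub>M borel)
                 (\<lambda>y. (\<eta> 1 y + a2 * \<eta> 2 y + a3 * \<eta> 3 y, b2 * \<eta> 2 y + b3 * \<eta> 3 y + \<eta> 4 y))"
  shows "char (distr M borel (\<xi> 1)) s * char (distr M borel (\<xi> 2)) (a2 * s + b2 * t)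
           * char (distr M borel (\<xi> 3)) (a3 * s + b3 * t) * char (distr M borel (\<xi> 4)) t
       = char (distr N borel (\<eta> 1)) s * char (distr N borel (\<eta> 2)) (a2 * s + b2 * t)
           * char (distr N borel (\<eta> 3)) (a3 * s + b3 * t) * char (distr N borel (\<eta> 4)) t"
proof -
  have [measurable]: "\<xi> j \<in> borel_measurable M" "\<eta> j \<in> borel_measurable N" if "j \<in> {1, 2, 3, 4}" for j
    using prob_space.indep_vars_measurable[OF M \<xi>_indep that]
      prob_space.indep_vars_measurable[OF N \<eta>_indep that] by simp_all
  have "distr M borel (\<lambda>x. s * (\<xi> 1 x + a2 * \<xi> 2 x + a3 * \<xi> 3 x) + t * (b2 * \<xi> 2 x + b3 * \<xi> 3 x + \<xi> 4 x))
      = distr N borel (\<lambda>y. s * (\<eta> 1 y + a2 * \<eta> 2 y + a3 * \<eta> 3 y) + t * (b2 * \<eta> 2 y + b3 * \<eta> 3 y + \<eta> 4 y))"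
    by (rule distr_linear_combination_eq_if_distr_pair_eq[OF same]) simp_all
  then have "char (distr M borel (\<lambda>x. s * (\<xi> 1 x + a2 * \<xi> 2 x + a3 * \<xi> 3 x) + t * (b2 * \<xi> 2 x + b3 * \<xi> 3 x + \<xi> 4 x))) 1
      = char (distr N borel (\<lambda>y. s * (\<eta> 1 y + a2 * \<eta> 2 y + a3 * \<eta> 3 y) + t * (b2 * \<eta> 2 y + b3 * \<eta> 3 y + \<eta> 4 y))) 1"
    by simp
  then show ?thesis
    by (simp only: prob_space.char_two_linear_forms[OF M \<xi>_indep] prob_space.char_two_linear_forms[OF N \<eta>_indep])
qed

theorem theorem2p2:
  fixes a2 a3 b2 b3 :: real
    and M :: "'a measure" and N :: "'b measure"
    and \<xi> :: "nat \<Rightarrow> 'a \<Rightarrow> real" and \<eta> :: "nat \<Rightarrow> 'b \<Rightarrow> real"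
  assumes nz: "a2 \<noteq> 0" "a3 \<noteq> 0" "b2 \<noteq> 0" "b3 \<noteq> 0"
    and cond: "(a2 * b3 \<noteq> a3 * b2 \<and> a2 * b2 \<noteq> - (a3 * b3))
             \<or> (a2 * b3 = a3 * b2 \<and> \<bar>a2\<bar> \<noteq> \<bar>a3\<bar>)
             \<or> (a2 * b3 = a3 * b2 \<and> a2 = a3)"
    and M: "prob_space M"
    and \<xi>_indep: "prob_space.indep_vars M (\<lambda>_. borel) \<xi> {1, 2, 3, 4}"
    and \<xi>_char: "\<And>j t. j \<in> {1, 2, 3, 4} \<Longrightarrow> char (distr M borel (\<xi> j)) t \<noteq> 0"
    and \<xi>_id: "distr M borel (\<xi> 2) = distr M borel (\<xi> 3)"
    and N: "prob_space N"
    and \<eta>_indep: "prob_space.indep_vars N (\<lambda>_. borel) \<eta> {1, 2, 3, 4}"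
    and \<eta>_char: "\<And>j t. j \<in> {1, 2, 3, 4} \<Longrightarrow> char (distr N borel (\<eta> j)) t \<noteq> 0"
    and \<eta>_id: "distr N borel (\<eta> 2) = distr N borel (\<eta> 3)"
    and same: "distr M (borel \<Otimes>\<^sub>M borel)
                 (\<lambda>x. (\<xi> 1 x + a2 * \<xi> 2 x + a3 * \<xi> 3 x, b2 * \<xi> 2 x + b3 * \<xi> 3 x + \<xi> 4 x))
             = distr N (borel \<Otimes>\<^sub>M borel)
                 (\<lambda>y. (\<eta> 1 y + a2 * \<eta> 2 y + a3 * \<eta> 3 y, b2 * \<eta> 2 y + b3 * \<eta> 3 y + \<eta> 4 y))"
  shows "\<exists>\<alpha> :: nat \<Rightarrow> real. \<forall>j \<in> {1, 2, 3, 4}.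
           distr N borel (\<eta> j) = distr M borel (\<lambda>x. \<xi> j x + \<alpha> j)"
proof -
  note \<xi>_meas = prob_space.indep_vars_measurable[OF M \<xi>_indep]
    and \<eta>_meas = prob_space.indep_vars_measurable[OF N \<eta>_indep]
  define h where "h j t = char (distr N borel (\<eta> j)) t / char (distr M borel (\<xi> j)) t" for j t
  have h: "continuous_on UNIV (h j)" "h j 0 = 1" if "j \<in> {1, 2, 3, 4}" for j
    unfolding h_def[abs_def]
    using continuous_char_ratio[OF M N \<xi>_meas[OF that] \<eta>_meas[OF that] \<xi>_char[OF that]] by auto
  have h3: "h 3 = h 2"
    by (simp add: h_def[abs_def] \<xi>_id \<eta>_id)
  have "h 1 s * h 2 (a2 * s + b2 * t) * h 3 (a3 * s + b3 * t) * h 4 t = 1" for s t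
    using char_products_eq_if_linear_forms_distr_eq[OF M \<xi>_indep N \<eta>_indep same, of s t] \<xi>_char \<eta>_char
    by (simp add: h_def)
  then obtain z where z: "\<And>t. h 2 t = exp (of_real t * z)"
      "\<And>t. h 1 t = exp (of_real t * (- of_real (a2 + a3) * z))"
      "\<And>t. h 4 t = exp (of_real t * (- of_real (b2 + b3) * z))"
    using multiplicative_functional_equation_exp[of "h 1" "h 2" "h 4"] h nz(1,3) cond
    unfolding h3 by blast
  define w where "w j = (if j = 1 then - of_real (a2 + a3) * z
    else if j = 4 then - of_real (b2 + b3) * z else z)" for j :: nat
  have h_exp: "h j t = exp (of_real t * w j)" if "j \<in> {1, 2, 3, 4}" for j t
    using that h3 z by (auto simp: w_def)
  have "distr N borel (\<eta> j) = distr M borel (\<lambda>x. \<xi> j x + Im (w j))" if "j \<in> {1, 2, 3, 4}" for j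
    by (rule distr_eq_shift_if_char_ratio_eq_exp[OF M N \<xi>_meas[OF that] \<eta>_meas[OF that] \<xi>_char[OF that]])
      (use h_exp[OF that] in \<open>simp add: h_def\<close>)
  then show ?thesis
    by (intro exI[of _ "\<lambda>j. Im (w j)"]) blast
qed

end
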